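(* For every basis element $\Phi_{j,T,K}$ (with $K\in\mathbf K$, $m=|\overline K|$, $T\in\mathbf T_{m,l}$, $0\le j\le m-2l$): $$\hat\omega_N\Phi_{j,T,K}=\begin{cases}(j+1)\Phi_{j+1,T,K},& j<m-2l,\\ 0,& j=m-2l,\end{cases}\qquad \hat\omega_N^\dagger\Phi_{j,T,K}=\begin{cases}(m-2l-j+1)\Phi_{j-1,T,K},& j>0,\\ 0,& j=0.\end{cases}$$
   Context: $\mathcal H_N$ has basis $e_{-N},\dots,e_{N-1}$; $\psi_i$ is left exterior multiplication by $e_i$ and $\psi_i^\dagger$ the interior product with the dual covector $e_i^*$ ($e^*_i(e_k)=\delta_{ik}$). $\omega_N:=\sum_{i=1}^N(-1)^ie_{-i}\wedge e_{i-1}$, $\hat\omega_N\mu:=\omega_N\wedge\mu$, and $\hat\omega_N^\dagger:=\sum_{i=0}^{N-1}(-1)^i\psi^\dagger_{-i-1}\psi^\dagger_i$. $X_i:=(-1)^ie_i\wedge e_{-i-1}$. $\mathbf K$ = subsets $K\subset\{-N,\dots,N-1\}$ with $K\cap(-K-1)=\emptyset$; $e_K:=e_{K_k}\wedge\cdots\wedge e_{K_1}$ for $K_1<\dots<K_k$; $\overline K:=\{-1,\dots,-N\}\setminus(K\cup(-K-1))=\{\overline K_1,\dots,\overline K_m\}$; $\omega_{\overline K}:=\sum_aX_{\overline K_a}$. $\mathbf T_{m,l}$: standard Young tableaux of shape $(2^l,1^{m-2l})$, rows $i\le l$ with entries $a_{i,1}<a_{i,2}$; $V_T(X_{\overline K}):=\prod_{i=1}^l(X_{\overline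 K_{a_{i,1}}}-X_{\overline K_{a_{i,2}}})$; $\Phi_{j,T,K}:=\frac1{j!}\omega_{\overline K}^j\wedge V_T(X_{\overline K})\wedge e_K$. *)

theory Defs
  imports Complex_Main "HOL-Library.Function_Algebras"
begin

text \<open>Exterior algebra over the real space with basis e_i (i an integer).
  An element is a coefficient function on finite index sets: x S is the
  coefficient of the canonical basis monomial e_S := e_{s_k} wedge ... wedge e_{s_1}
  where S = {s_1 < ... < s_k} (decreasing order, as for e_K in the paper).
  All elements used below are supported on subsets of {-N..N-1}, i.e. they lie in
  the exterior algebra of H_N.\<close>

type_synonym ext = "int set \<Rightarrow> real"

definition ext_one :: ext where
  "ext_one = (\<lambda>S. if S = {} then 1 else 0)"

definition ext_smult :: "real \<Rightarrow> ext \<Rightarrow> ext" where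
  "ext_smult c x = (\<lambda>S. c * x S)"

text \<open>Sign of reordering e_A wedge e_B (both in decreasing order) into e_{A union B}.\<close>
definition wsign :: "int set \<Rightarrow> int set \<Rightarrow> real" where
  "wsign A B = (-1) ^ card {(a, b). a \<in> A \<and> b \<in> B \<and> a < b}"

definition wedge :: "ext \<Rightarrow> ext \<Rightarrow> ext" (infixr "\<^bold>\<and>" 70) where
  "wedge x y = (\<lambda>S. if finite S then (\<Sum>A\<in>Pow S. wsign A (S - A) * x A * y (S - A)) else 0)"

definition wpow :: "ext \<Rightarrow> nat \<Rightarrow> ext" where
  "wpow x j = ((wedge x) ^^ j) ext_one"

definition wedge_list :: "ext list \<Rightarrow> ext" where
  "wedge_list xs = foldr wedge xs ext_one"

definition e :: "int \<Rightarrow> ext" where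
  "e i = (\<lambda>S. if S = {i} then 1 else 0)"

definition psi :: "int \<Rightarrow> ext \<Rightarrow> ext" where
  "psi i x = e i \<^bold>\<and> x"

text \<open>psi_i^dagger : interior product with e_i^*; on monomials,
  iota_{e_i^*}(v_1 wedge ... wedge v_k) = sum_p (-1)^(p-1) e_i^*(v_p) v_1 ... (omit v_p) ... v_k.
  For e_T (decreasing order) with i in T, i sits at position 1 + #{t in T. t > i}.\<close>
definition psi_dag :: "int \<Rightarrow> ext \<Rightarrow> ext" where
  "psi_dag i x = (\<lambda>S. if finite S \<and> i \<notin> S
       then (-1) ^ card {s \<in> S. s > i} * x (insert i S) else 0)"

definition sgnpow :: "int \<Rightarrow> real" where
  "sgnpow i = (if even i then 1 else -1)"

definition eset :: "int set \<Rightarrow> ext" where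
  "eset K = wedge_list (map e (rev (sorted_list_of_set K)))"

definition omegaN :: "nat \<Rightarrow> ext" where
  "omegaN N = (\<Sum>i\<in>{1..int N}. ext_smult (sgnpow i) (e (-i) \<^bold>\<and> e (i - 1)))"

definition omega_hat :: "nat \<Rightarrow> ext \<Rightarrow> ext" where
  "omega_hat N \<mu> = omegaN N \<^bold>\<and> \<mu>"

definition omega_hat_dag :: "nat \<Rightarrow> ext \<Rightarrow> ext" where
  "omega_hat_dag N \<mu> = (\<Sum>i\<in>{0..int N - 1}. ext_smult (sgnpow i) (psi_dag (-i-1) (psi_dag i \<mu>)))"

definition Xe :: "int \<Rightarrow> ext" where
  "Xe i = ext_smult (sgnpow i) (e i \<^bold>\<and> e (-i-1))"

definition Kset :: "nat \<Rightarrow> int set set" where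
  "Kset N = {K. K \<subseteq> {-int N..int N - 1} \<and> K \<inter> ((\<lambda>k. -k-1) ` K) = {}}"

definition Kbar :: "nat \<Rightarrow> int set \<Rightarrow> int set" where
  "Kbar N K = {-int N..-1} - (K \<union> ((\<lambda>k. -k-1) ` K))"

text \<open>K-bar_a, 1-indexed, increasing\<close>
definition Kbar_nth :: "nat \<Rightarrow> int set \<Rightarrow> nat \<Rightarrow> int" where
  "Kbar_nth N K a = sorted_list_of_set (Kbar N K) ! (a - 1)"

definition omega_Kbar :: "nat \<Rightarrow> int set \<Rightarrow> ext" where
  "omega_Kbar N K = (\<Sum>a\<in>{1..card (Kbar N K)}. Xe (Kbar_nth N K a))"

text \<open>Standard Young tableaux of shape (2^l, 1^(m-2l)): T i c is the entry in row i,
  column c (rows and columns 1-indexed).\<close>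
definition syt_cells :: "nat \<Rightarrow> nat \<Rightarrow> (nat \<times> nat) set" where
  "syt_cells m l = {(i, c). 1 \<le> i \<and> i \<le> l \<and> (c = 1 \<or> c = 2)} \<union> {(i, 1) | i. l < i \<and> i \<le> m - l}"

definition SYT :: "nat \<Rightarrow> nat \<Rightarrow> (nat \<Rightarrow> nat \<Rightarrow> nat) set" where
  "SYT m l = {T. 2 * l \<le> m \<and>
     bij_betw (\<lambda>(i, c). T i c) (syt_cells m l) {1..m} \<and>
     (\<forall>i c. (i, c) \<in> syt_cells m l \<and> (i, Suc c) \<in> syt_cells m l \<longrightarrow> T i c < T i (Suc c)) \<and>
     (\<forall>i c. (i, c) \<in> syt_cells m l \<and> (Suc i, c) \<in> syt_cells m l \<longrightarrow> T i c < T (Suc i) c)}"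

definition VT :: "nat \<Rightarrow> int set \<Rightarrow> nat \<Rightarrow> (nat \<Rightarrow> nat \<Rightarrow> nat) \<Rightarrow> ext" where
  "VT N K l T = wedge_list (map (\<lambda>i. Xe (Kbar_nth N K (T i 1)) - Xe (Kbar_nth N K (T i 2))) [1..<Suc l])"

definition Phi :: "nat \<Rightarrow> nat \<Rightarrow> nat \<Rightarrow> (nat \<Rightarrow> nat \<Rightarrow> nat) \<Rightarrow> int set \<Rightarrow> ext" where
  "Phi N l j T K = ext_smult (1 / fact j) (wpow (omega_Kbar N K) j \<^bold>\<and> VT N K l T \<^bold>\<and> eset K)"

end

theory Submission
  imports Defs
begin

text \<open>On the span of the monomials X_S \<and> e_K with S \<subseteq> K-bar, the operator omega_hat_N acts as
  left multiplication by omega_K-bar (every other X_a shares an index with e_K), and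
  omega_hat_dag_N sends X_S \<and> e_K to the sum of the X_(S - {b}) \<and> e_K over b \<in> S.  Hence on
  vectors of degree d = |S| the commutator of the two operators is multiplication by m - 2d.
  The vector v = V_T \<and> e_K has degree l and is annihilated by omega_hat_dag_N, since X_a - X_b
  contracts to 1 - 1.  So v is a lowest weight vector of weight m - 2l for this sl_2-pair:
  omega_hat_dag (omega^(j+1) v) = (j+1)(m-2l-j) omega^j v, and descending from the degree bound
  l + j \<le> m shows that omega^j v = 0 for j > m - 2l.\<close>

section \<open>The exterior algebra\<close>

lemma sum_ext_apply: "(\<Sum>i\<in>I. f i) S = (\<Sum>i\<in>I. (f i :: ext) S)"
  by (induct I rule: infinite_finite_induct) auto

definition avoids :: "int \<Rightarrow> ext \<Rightarrow> bool" where
  "avoids k x \<longleftrightarrow> (\<forall>S. x S \<noteq> 0 \<longrightarrow> k \<notin> S)"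
definition contains :: "int \<Rightarrow> ext \<Rightarrow> bool" where
  "contains k x \<longleftrightarrow> (\<forall>S. x S \<noteq> 0 \<longrightarrow> k \<in> S)"
definition even_ext :: "ext \<Rightarrow> bool" where
  "even_ext x \<longleftrightarrow> (\<forall>S. x S \<noteq> 0 \<longrightarrow> even (card S))"
definition fin_supp :: "ext \<Rightarrow> bool" where
  "fin_supp x \<longleftrightarrow> (\<forall>S. infinite S \<longrightarrow> x S = 0)"
definition grade_inv :: "ext \<Rightarrow> ext" where
  "grade_inv x = (\<lambda>S. (-1) ^ card S * x S)"

lemma wedge_apply: "finite S \<Longrightarrow> (x \<^bold>\<and> y) S = (\<Sum>A\<in>Pow S. wsign A (S - A) * x A * y (S - A))"
  by (simp add: wedge_def)
lemma wedge_inf: "infinite S \<Longrightarrow> (x \<^bold>\<and> y) S = 0"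
  by (simp add: wedge_def)

lemma wedge_add_right: "z \<^bold>\<and> (x + y) = z \<^bold>\<and> x + z \<^bold>\<and> y"
  by (auto simp: wedge_def fun_eq_iff algebra_simps sum.distrib)
lemma wedge_diff_left: "(x - y) \<^bold>\<and> z = x \<^bold>\<and> z - y \<^bold>\<and> z"
  by (auto simp: wedge_def fun_eq_iff algebra_simps sum_subtractf)
lemma wedge_smult_left: "ext_smult c x \<^bold>\<and> z = ext_smult c (x \<^bold>\<and> z)"
  by (auto simp: wedge_def fun_eq_iff ext_smult_def algebra_simps sum_distrib_left)
lemma wedge_smult_right: "z \<^bold>\<and> ext_smult c x = ext_smult c (z \<^bold>\<and> x)"
  by (auto simp: wedge_def fun_eq_iff ext_smult_def algebra_simps sum_distrib_left)
lemma wedge_zero_left[simp]: "0 \<^bold>\<and> z = 0"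
  by (auto simp: wedge_def fun_eq_iff)
lemma wedge_zero_right[simp]: "z \<^bold>\<and> 0 = 0"
  by (auto simp: wedge_def fun_eq_iff)
lemma wedge_sum_left: "(\<Sum>i\<in>I. f i) \<^bold>\<and> z = (\<Sum>i\<in>I. f i \<^bold>\<and> z)"
  by (auto simp: fun_eq_iff sum_ext_apply wedge_def sum_distrib_left sum_distrib_right intro: sum.swap)
lemma wedge_sum_right: "z \<^bold>\<and> (\<Sum>i\<in>I. f i) = (\<Sum>i\<in>I. z \<^bold>\<and> f i)"
  by (auto simp: fun_eq_iff sum_ext_apply wedge_def sum_distrib_left sum_distrib_right intro: sum.swap)

lemma ext_smult_add: "ext_smult c (x + y) = ext_smult c x + ext_smult c y"
  by (auto simp: ext_smult_def fun_eq_iff algebra_simps)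
lemma ext_smult_smult: "ext_smult c (ext_smult d x) = ext_smult (c * d) x"
  by (auto simp: ext_smult_def fun_eq_iff algebra_simps)
lemma ext_smult_zero[simp]: "ext_smult c 0 = 0" "ext_smult 0 x = 0"
  by (auto simp: ext_smult_def fun_eq_iff)
lemma ext_smult_one[simp]: "ext_smult 1 x = x"
  by (auto simp: ext_smult_def fun_eq_iff)
lemma ext_smult_sum: "ext_smult c (\<Sum>i\<in>I. f i) = (\<Sum>i\<in>I. ext_smult c (f i))"
  by (auto simp: fun_eq_iff sum_ext_apply ext_smult_def sum_distrib_left)
lemma sum_const_ext: "(\<Sum>i\<in>I. (x::ext)) = ext_smult (real (card I)) x"
  by (auto simp: ext_smult_def fun_eq_iff sum_ext_apply)
lemma ext_smult_add_scalar: "ext_smult c x + ext_smult d x = ext_smult (c + d) x"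
  by (auto simp: ext_smult_def fun_eq_iff algebra_simps)
lemma diff_eq_add_ext_smult: "x - y = x + ext_smult (-1) y"
  by (auto simp: ext_smult_def fun_eq_iff algebra_simps)

lemma ext_smult_eq_0D: "c \<noteq> 0 \<Longrightarrow> ext_smult c x = 0 \<Longrightarrow> x = 0"
  by (auto simp: ext_smult_def fun_eq_iff)

definition inversions :: "int set \<Rightarrow> int set \<Rightarrow> (int \<times> int) set" where
  "inversions A B = {(a, b). a \<in> A \<and> b \<in> B \<and> a < b}"

lemma wsign_eq_inversions: "wsign A B = (-1) ^ card (inversions A B)"
  by (simp add: wsign_def inversions_def)

lemma finite_inversions: "finite A \<Longrightarrow> finite B \<Longrightarrow> finite (inversions A B)"
  by (rule finite_subset[of _ "A \<times> B"]) (auto simp: inversions_def)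

lemma wsign_union_left:
  assumes "finite A" "finite C" "finite B" "A \<inter> C = {}"
  shows "wsign (A \<union> C) B = wsign A B * wsign C B"
proof -
  have "inversions (A \<union> C) B = inversions A B \<union> inversions C B" by (auto simp: inversions_def)
  moreover have "inversions A B \<inter> inversions C B = {}" using assms(4) by (auto simp: inversions_def)
  ultimately show ?thesis using assms
    by (simp add: wsign_eq_inversions card_Un_disjoint finite_inversions power_add)
qed

lemma wsign_union_right:
  assumes "finite A" "finite C" "finite B" "A \<inter> C = {}"
  shows "wsign B (A \<union> C) = wsign B A * wsign B C"
proof -
  have "inversions B (A \<union> C) = inversions B A \<union> inversions B C" by (auto simp: inversions_def)
  moreover have "inversions B A \<inter> inversions B C = {}" using assms(4) by (auto simp: inversions_def)
  ultimately show ?thesis using assms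
    by (simp add: wsign_eq_inversions card_Un_disjoint finite_inversions power_add)
qed

lemma wsign_single_left: "wsign {i} B = (-1) ^ card {b\<in>B. i < b}"
proof -
  have "inversions {i} B = (\<lambda>b. (i, b)) ` {b\<in>B. i < b}" by (auto simp: inversions_def)
  moreover have "inj_on (\<lambda>b. (i, b)) {b\<in>B. i < b}" by (auto simp: inj_on_def)
  ultimately show ?thesis by (simp add: wsign_eq_inversions card_image)
qed

lemma wsign_single_right: "wsign A {i} = (-1) ^ card {a\<in>A. a < i}"
proof -
  have "inversions A {i} = (\<lambda>a. (a, i)) ` {a\<in>A. a < i}" by (auto simp: inversions_def)
  moreover have "inj_on (\<lambda>a. (a, i)) {a\<in>A. a < i}" by (auto simp: inj_on_def)
  ultimately show ?thesis by (simp add: wsign_eq_inversions card_image)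
qed

lemma wsign_empty[simp]: "wsign {} B = 1" "wsign A {} = 1"
  by (simp_all add: wsign_def)

lemma wsign_sq: "wsign A B * wsign A B = 1"
  by (simp add: wsign_def)

lemma wsign_swap:
  assumes "finite A" "finite B" "A \<inter> B = {}"
  shows "wsign A B * wsign B A = (-1) ^ (card A * card B)"
proof -
  have "inversions B A = prod.swap ` {(a, b). a \<in> A \<and> b \<in> B \<and> b < a}"
    by (auto simp: inversions_def image_iff)
  hence c: "card (inversions B A) = card {(a, b). a \<in> A \<and> b \<in> B \<and> b < a}"
    by (simp add: card_image)
  have "A \<times> B = inversions A B \<union> {(a, b). a \<in> A \<and> b \<in> B \<and> b < a}"
    using assms(3) by (auto simp: inversions_def)
  moreover have "inversions A B \<inter> {(a, b). a \<in> A \<and> b \<in> B \<and> b < a} = {}"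
    by (auto simp: inversions_def)
  moreover have "finite {(a, b). a \<in> A \<and> b \<in> B \<and> b < a}"
    by (rule finite_subset[of _ "A \<times> B"]) (use assms in auto)
  ultimately have "card A * card B = card (inversions A B) + card (inversions B A)"
    using assms by (simp add: c card_Un_disjoint finite_inversions flip: card_cartesian_product)
  thus ?thesis by (simp add: wsign_eq_inversions power_add)
qed

lemma wedge_nonzero_split: "(x \<^bold>\<and> y) S \<noteq> 0 \<Longrightarrow> finite S \<and> (\<exists>A\<subseteq>S. x A \<noteq> 0 \<and> y (S - A) \<noteq> 0)"
proof (rule ccontr)
  assume a: "(x \<^bold>\<and> y) S \<noteq> 0" "\<not> (finite S \<and> (\<exists>A\<subseteq>S. x A \<noteq> 0 \<and> y (S - A) \<noteq> 0))"
  show False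
  proof (cases "finite S")
    case True
    hence "(x \<^bold>\<and> y) S = 0" using a(2) by (auto simp: wedge_apply intro!: sum.neutral)
    thus False using a(1) by simp
  qed (use a in \<open>simp add: wedge_inf\<close>)
qed

lemma avoids_wedge: "avoids k x \<Longrightarrow> avoids k y \<Longrightarrow> avoids k (x \<^bold>\<and> y)"
  unfolding avoids_def
proof (intro allI impI)
  fix S assume a: "\<forall>S. x S \<noteq> 0 \<longrightarrow> k \<notin> S" "\<forall>S. y S \<noteq> 0 \<longrightarrow> k \<notin> S" "(x \<^bold>\<and> y) S \<noteq> 0"
  obtain A where "A \<subseteq> S" "x A \<noteq> 0" "y (S - A) \<noteq> 0" using wedge_nonzero_split[OF a(3)] by blast
  thus "k \<notin> S" using a(1,2) by blast
qed
lemma avoids_diff: "avoids k x \<Longrightarrow> avoids k y \<Longrightarrow> avoids k (x - y)"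
  unfolding avoids_def
proof (intro allI impI)
  fix S assume a: "\<forall>S. x S \<noteq> 0 \<longrightarrow> k \<notin> S" "\<forall>S. y S \<noteq> 0 \<longrightarrow> k \<notin> S" "(x - y) S \<noteq> 0"
  hence "x S \<noteq> 0 \<or> y S \<noteq> 0" by auto
  thus "k \<notin> S" using a(1,2) by blast
qed

lemma contains_wedge_right: "contains k y \<Longrightarrow> contains k (x \<^bold>\<and> y)"
  unfolding contains_def
proof (intro allI impI)
  fix S assume a: "\<forall>S. y S \<noteq> 0 \<longrightarrow> k \<in> S" "(x \<^bold>\<and> y) S \<noteq> 0"
  obtain A where "A \<subseteq> S" "x A \<noteq> 0" "y (S - A) \<noteq> 0" using wedge_nonzero_split[OF a(2)] by blast
  thus "k \<in> S" using a(1) by blast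
qed
lemma contains_wedge_eq_0: "contains k x \<Longrightarrow> contains k y \<Longrightarrow> x \<^bold>\<and> y = 0"
  unfolding contains_def
proof (rule ext, rule ccontr)
  fix S assume a: "\<forall>S. x S \<noteq> 0 \<longrightarrow> k \<in> S" "\<forall>S. y S \<noteq> 0 \<longrightarrow> k \<in> S" "(x \<^bold>\<and> y) S \<noteq> 0 S"
  hence "(x \<^bold>\<and> y) S \<noteq> 0" by simp
  then obtain A where "A \<subseteq> S" "x A \<noteq> 0" "y (S - A) \<noteq> 0" using wedge_nonzero_split[of x y S] by blast
  thus False using a(1,2) by blast
qed
lemma fin_supp_wedge: "fin_supp (x \<^bold>\<and> y)"
  by (simp add: fin_supp_def wedge_inf)

lemma fin_supp_one: "fin_supp ext_one" by (auto simp: fin_supp_def ext_one_def)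

lemma wedge_one_left: "fin_supp y \<Longrightarrow> ext_one \<^bold>\<and> y = y"
proof (rule ext)
  fix S assume f: "fin_supp y"
  show "(ext_one \<^bold>\<and> y) S = y S"
  proof (cases "finite S")
    case True
    have "(\<Sum>A\<in>Pow S. wsign A (S - A) * ext_one A * y (S - A)) = (\<Sum>A\<in>Pow S. if {}
        = A then y S else 0)"
      by (rule sum.cong) (auto simp: ext_one_def)
    thus ?thesis using True by (simp add: wedge_apply)
  qed (use f in \<open>auto simp: fin_supp_def wedge_inf\<close>)
qed

lemma wedge_wedge_left_apply:
  assumes "finite S"
  shows "((x \<^bold>\<and> y) \<^bold>\<and> z) S = (\<Sum>C\<in>Pow S. \<Sum>D\<in>Pow (S - C).
    wsign C D * wsign C (S - C - D) * wsign D (S - C - D) * x C * y D * z (S - C - D))"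
proof -
  define h where "h A C = wsign A (S - A) * wsign C (A - C) * x C * y (A - C) * z (S - A)" for A C
  have "((x \<^bold>\<and> y) \<^bold>\<and> z) S = (\<Sum>A\<in>Pow S. \<Sum>C\<in>Pow A. h A C)"
    unfolding h_def using assms
    by (auto simp: wedge_apply sum_distrib_left sum_distrib_right finite_subset algebra_simps intro!: sum.cong)
  also have "\<dots> = (\<Sum>A\<in>Pow S. \<Sum>C\<in>{C. C \<in> Pow S \<and> C \<subseteq> A}. h A C)"
    by (rule sum.cong) (auto intro!: sum.cong)
  also have "\<dots> = (\<Sum>C\<in>Pow S. \<Sum>A\<in>{A. A \<in> Pow S \<and> C \<subseteq> A}. h A C)"
    by (rule sum.swap_restrict) (use assms in auto)
  also have "\<dots> = (\<Sum>C\<in>Pow S. \<Sum>D\<in>Pow (S - C).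
    wsign C D * wsign C (S - C - D) * wsign D (S - C - D) * x C * y D * z (S - C - D))"
  proof (rule sum.cong[OF refl])
    fix C assume C: "C \<in> Pow S"
    show "(\<Sum>A\<in>{A. A \<in> Pow S \<and> C \<subseteq> A}. h A C) = (\<Sum>D\<in>Pow (S - C).
      wsign C D * wsign C (S - C - D) * wsign D (S - C - D) * x C * y D * z (S - C - D))"
    proof (rule sym, rule sum.reindex_bij_witness[where j = "\<lambda>D. C \<union> D" and i = "\<lambda>A. A - C"])
      fix D assume D: "D \<in> Pow (S - C)"
      have "finite C" "finite D" using assms C D by (auto intro: finite_subset)
      moreover have "C \<union> D - C = D" "S - (C \<union> D) = S - C - D" using D by auto
      ultimately show "h (C \<union> D) C =
        wsign C D * wsign C (S - C - D) * wsign D (S - C - D) * x C * y D * z (S - C - D)"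
        using D assms unfolding h_def by (subst wsign_union_left) (auto simp: algebra_simps)
    qed (use C in auto)
  qed
  finally show ?thesis .
qed

lemma wedge_wedge_right_apply:
  assumes "finite S"
  shows "(x \<^bold>\<and> (y \<^bold>\<and> z)) S = (\<Sum>C\<in>Pow S. \<Sum>D\<in>Pow (S - C).
    wsign C D * wsign C (S - C - D) * wsign D (S - C - D) * x C * y D * z (S - C - D))"
proof -
  have "wsign C (S - C) = wsign C D * wsign C (S - C - D)" if "C \<in> Pow S" "D \<in> Pow (S - C)" for C D
  proof -
    have "S - C = D \<union> (S - C - D)" using that by auto
    then show ?thesis
      using that assms
        by (metis Diff_disjoint Int_Diff finite_Diff finite_subset inf_commute wsign_union_right Pow_iff)
  qed
  then show ?thesis
    using assms by (auto simp: wedge_apply sum_distrib_left algebra_simps intro!: sum.cong)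
qed

lemma wedge_assoc: "(x \<^bold>\<and> y) \<^bold>\<and> z = x \<^bold>\<and> (y \<^bold>\<and> z)"
proof
  fix S show "((x \<^bold>\<and> y) \<^bold>\<and> z) S = (x \<^bold>\<and> (y \<^bold>\<and> z)) S"
    by (cases "finite S") (simp_all add: wedge_wedge_left_apply wedge_wedge_right_apply wedge_inf)
qed

lemma wpow_0: "wpow x 0 = ext_one" by (simp add: wpow_def)
lemma wpow_Suc: "wpow x (Suc n) = x \<^bold>\<and> wpow x n" by (simp add: wpow_def)

lemma wedge_comm_even:
  assumes "even_ext x" shows "x \<^bold>\<and> y = y \<^bold>\<and> x"
proof (rule ext)
  fix S show "(x \<^bold>\<and> y) S = (y \<^bold>\<and> x) S"
  proof (cases "finite S")
    case False thus ?thesis by (simp add: wedge_inf)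
  next
    case True
    have "(y \<^bold>\<and> x) S = (\<Sum>B\<in>Pow S. wsign B (S - B) * y B * x (S - B))" using True
      by (simp add: wedge_apply)
    also have "\<dots> = (\<Sum>A\<in>Pow S. wsign A (S - A) * x A * y (S - A))"
    proof (rule sum.reindex_bij_witness[where i="\<lambda>A. S - A" and j="\<lambda>A. S - A"])
      fix A assume A: "A \<in> Pow S"
      have e: "S - (S - A) = A" using A by auto
      show "wsign (S - A) (S - (S - A)) * x (S - A) * y (S - (S - A)) =
          wsign A (S - A) * y A * x (S - A)"
      proof (cases "x (S - A) = 0")
        case False
        hence ev: "even (card (S - A))" using assms by (auto simp: even_ext_def)
        have fs: "finite A" "finite (S - A)" using A True by (auto intro: finite_subset)
        have "wsign A (S - A) * wsign (S - A) A = 1"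
          using wsign_swap[OF fs] ev by (simp add: Int_Diff)
        hence "wsign (S - A) A = wsign A (S - A)"
          by (metis mult.assoc mult_1 mult.commute wsign_sq)
        thus ?thesis using e by simp
      qed (simp add: e)
    qed auto
    finally show ?thesis using True by (simp add: wedge_apply)
  qed
qed

lemma sum_remove_from_insert:
  assumes "finite T" "a \<notin> T"
  shows "(\<Sum>b\<in>insert a T. f (insert a T - {b})) = f T + (\<Sum>b\<in>T. f (insert a (T - {b})))"
proof -
  have "insert a T - {a} = T" "insert a T - {b} = insert a (T - {b})" if "b \<in> T" for b
    using assms(2) that by auto
  then show ?thesis using assms by (simp add: sum.insert cong: sum.cong)
qed

section \<open>The interior product\<close>

lemma psi_dag_zero[simp]: "psi_dag i 0 = 0"
  by (auto simp: psi_dag_def fun_eq_iff)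
lemma psi_dag_avoids: "avoids i y \<Longrightarrow> psi_dag i y = 0"
  by (auto simp: avoids_def psi_dag_def fun_eq_iff)
lemma avoids_psi_dag: "avoids k y \<Longrightarrow> k \<noteq> i \<Longrightarrow> avoids k (psi_dag i y)"
  by (auto simp: avoids_def psi_dag_def)
lemma grade_inv_even: "even_ext x \<Longrightarrow> grade_inv x = x"
  by (auto simp: even_ext_def grade_inv_def fun_eq_iff)
lemma grade_inv_zero: "grade_inv 0 = 0" by (simp add: grade_inv_def fun_eq_iff)
lemma psi_dag_add: "psi_dag i (x + y) = psi_dag i x + psi_dag i y"
  by (auto simp: psi_dag_def fun_eq_iff algebra_simps)
lemma psi_dag_smult: "psi_dag i (ext_smult c x) = ext_smult c (psi_dag i x)"
  by (auto simp: psi_dag_def fun_eq_iff ext_smult_def algebra_simps)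

lemma sum_Pow_insert:
  assumes "finite S0" "i \<notin> S0"
  shows "(\<Sum>A\<in>Pow (insert i S0). f A) = (\<Sum>A\<in>Pow S0. f A) + (\<Sum>A\<in>Pow S0. f (insert i A))"
proof -
  have inj: "inj_on (insert i) (Pow S0)" using assms(2) by (auto simp: inj_on_def)
  have d: "Pow S0 \<inter> insert i ` Pow S0 = {}" using assms(2) by auto
  show ?thesis unfolding Pow_insert
    by (subst sum.union_disjoint) (use assms d inj in \<open>auto simp: sum.reindex\<close>)
qed

definition count_above :: "int \<Rightarrow> int set \<Rightarrow> nat" where "count_above i A = card {s\<in>A. s > i}"
definition count_below :: "int \<Rightarrow> int set \<Rightarrow> nat" where "count_below i A = card {s\<in>A. s < i}"

lemma count_above_split:
  "finite S \<Longrightarrow> A \<subseteq> S \<Longrightarrow> count_above i S = count_above i A + count_above i (S - A)"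
proof -
  assume a: "finite S" "A \<subseteq> S"
  have "{s\<in>S. s > i} = {s\<in>A. s > i} \<union> {s\<in>S - A. s > i}" using a by auto
  thus ?thesis unfolding count_above_def using a
    by (simp add: card_Un_disjoint finite_subset disjoint_iff)
qed

lemma count_below_add_above: "finite A \<Longrightarrow> i \<notin> A \<Longrightarrow> count_below i A + count_above i A = card A"
proof -
  assume a: "finite A" "i \<notin> A"
  have "A = {s\<in>A. s < i} \<union> {s\<in>A. s > i}"
  proof (intro set_eqI iffI)
    fix s assume "s \<in> A" thus "s \<in> {s\<in>A. s < i} \<union> {s\<in>A. s > i}" using a
      by (cases "s < i") (auto, metis linorder_neqE_linordered_idom)
  qed auto
  hence "card A = card ({s\<in>A. s < i} \<union> {s\<in>A. s > i})" by simp
  also have "\<dots> = count_below i A + count_above i A"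
    unfolding count_below_def count_above_def using a by (subst card_Un_disjoint) auto
  finally show ?thesis by simp
qed

lemma wsign_insert_left:
  "finite A \<Longrightarrow> finite B \<Longrightarrow> i \<notin> A \<Longrightarrow> wsign (insert i A) B = wsign A B * (-1) ^ count_above i B"
  using wsign_union_left[of A "{i}" B] by (simp add: wsign_single_left count_above_def)
lemma wsign_insert_right:
  "finite A \<Longrightarrow> finite B \<Longrightarrow> i \<notin> B \<Longrightarrow> wsign A (insert i B) = wsign A B * (-1) ^ count_below i A"
  using wsign_union_right[of B "{i}" A] by (simp add: wsign_single_right count_below_def)

lemma psi_dag_apply:
  "psi_dag i x S = (if finite S \<and> i \<notin> S then (-1) ^ count_above i S * x (insert i S) else 0)"
  by (simp add: psi_dag_def count_above_def)

lemma wedge_apply_insert: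
  assumes "finite S" "i \<notin> S"
  shows "(x \<^bold>\<and> y) (insert i S) =
    (\<Sum>A\<in>Pow S. wsign A (insert i (S - A)) * x A * y (insert i (S - A))) +
    (\<Sum>A\<in>Pow S. wsign (insert i A) (S - A) * x (insert i A) * y (S - A))"
proof -
  have "insert i S - A = insert i (S - A)" "insert i S - insert i A = S - A" if "A \<in> Pow S" for A
    using that assms(2) by auto
  then show ?thesis
    using assms by (simp add: wedge_apply sum_Pow_insert del: Pow_iff insert_Diff_if)
qed

lemma psi_dag_wedge_cancel:
  assumes "finite S" "i \<notin> S"
  shows "(psi_dag i x \<^bold>\<and> y) (insert i S) + (grade_inv x \<^bold>\<and> psi_dag i y) (insert i S) = 0"
proof -
  define c where
    "c A = wsign A (S - A) * (-1) ^ card A * x (insert i A) * y (insert i (S - A))" for A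
  have fin: "finite A" "finite (S - A)" "i \<notin> A" "i \<notin> S - A" if "A \<in> Pow S" for A
    using that assms by (auto intro: finite_subset)
  have left_term: "wsign A (insert i (S - A)) * psi_dag i x A * y (insert i (S - A)) = c A"
    if "A \<in> Pow S" for A
    using fin[OF that] count_below_add_above[of A i]
    by (simp add: c_def wsign_insert_right psi_dag_apply flip: power_add)
  have "(psi_dag i x \<^bold>\<and> y) (insert i S) =
      (\<Sum>A\<in>Pow S. wsign A (insert i (S - A)) * psi_dag i x A * y (insert i (S - A)))"
    using assms by (simp add: wedge_apply_insert psi_dag_apply)
  also have "\<dots> = (\<Sum>A\<in>Pow S. c A)" using left_term by (rule sum.cong[OF refl])
  finally have left: "(psi_dag i x \<^bold>\<and> y) (insert i S) = (\<Sum>A\<in>Pow S. c A)" .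
  have right_term: "wsign (insert i A) (S - A) * grade_inv x (insert i A) * psi_dag i y (S - A) =
      - c A"
    if "A \<in> Pow S" for A
    using fin[OF that] by (simp add: c_def wsign_insert_left psi_dag_apply grade_inv_def)
  have "(grade_inv x \<^bold>\<and> psi_dag i y) (insert i S) =
      (\<Sum>A\<in>Pow S. wsign (insert i A) (S - A) * grade_inv x (insert i A) * psi_dag i y (S - A))"
    using assms by (simp add: wedge_apply_insert psi_dag_apply)
  also have "\<dots> = (\<Sum>A\<in>Pow S. - c A)" using right_term by (rule sum.cong[OF refl])
  finally show ?thesis using left by (simp add: sum_negf)
qed

lemma psi_dag_wedge_apply:
  assumes "finite S" "i \<notin> S"
  shows "psi_dag i (x \<^bold>\<and> y) S = (psi_dag i x \<^bold>\<and> y) S + (grade_inv x \<^bold>\<and> psi_dag i y) S"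
proof -
  let ?s = "(-1::real) ^ count_above i S"
  have fin: "finite A" "finite (S - A)" "i \<notin> A" "i \<notin> S - A" if "A \<in> Pow S" for A
    using that assms by (auto intro: finite_subset)
  have left_term: "?s * (wsign (insert i A) (S - A) * x (insert i A) * y (S - A)) =
      wsign A (S - A) * psi_dag i x A * y (S - A)" if A: "A \<in> Pow S" for A
    using fin[OF A] count_above_split[OF assms(1), of A i] A
    by (simp add: wsign_insert_left psi_dag_apply power_add)
  have right_term: "?s * (wsign A (insert i (S - A)) * x A * y (insert i (S - A))) =
      wsign A (S - A) * grade_inv x A * psi_dag i y (S - A)" if A: "A \<in> Pow S" for A
  proof -
    have "(-1::real) ^ count_above i A * (-1) ^ count_below i A = (-1) ^ card A"
      using count_below_add_above[of A i] fin[OF A] by (simp flip: power_add add: add.commute)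
    then show ?thesis
      using fin[OF A] count_above_split[OF assms(1), of A i] A
      by (simp add: wsign_insert_right psi_dag_apply grade_inv_def power_add)
  qed
  have "psi_dag i (x \<^bold>\<and> y) S =
      (\<Sum>A\<in>Pow S. ?s * (wsign A (insert i (S - A)) * x A * y (insert i (S - A)))) +
      (\<Sum>A\<in>Pow S. ?s * (wsign (insert i A) (S - A) * x (insert i A) * y (S - A)))"
    using assms by (simp add: psi_dag_apply wedge_apply_insert distrib_left sum_distrib_left)
  also have "\<dots> = (\<Sum>A\<in>Pow S. wsign A (S - A) * grade_inv x A * psi_dag i y (S - A)) +
      (\<Sum>A\<in>Pow S. wsign A (S - A) * psi_dag i x A * y (S - A))"
    by (rule arg_cong2[where f = "(+)"]; rule sum.cong[OF refl]) (simp_all add: left_term right_term)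
  finally show ?thesis using assms by (simp add: wedge_apply)
qed

lemma psi_dag_wedge: "psi_dag i (x \<^bold>\<and> y) = psi_dag i x \<^bold>\<and> y + grade_inv x \<^bold>\<and> psi_dag i y"
proof
  fix S
  show "psi_dag i (x \<^bold>\<and> y) S = (psi_dag i x \<^bold>\<and> y + grade_inv x \<^bold>\<and> psi_dag i y) S"
  proof (cases "finite S \<and> i \<notin> S")
    case True
    then show ?thesis by (simp add: psi_dag_wedge_apply)
  next
    case outside: False
    show ?thesis
    proof (cases "finite S")
      case True
      then have "S = insert i (S - {i})" "finite (S - {i})" "i \<notin> S - {i}" using outside by auto
      then show ?thesis using psi_dag_wedge_cancel outside by (metis plus_fun_apply psi_dag_apply)
    qed (simp add: psi_dag_apply wedge_inf)
  qed
qed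

section \<open>The elements X_a\<close>

lemma e_apply: "e a A = (if A = {a} then 1 else 0)" by (simp add: e_def)

lemma e_wedge_e: "e a \<^bold>\<and> e b = (\<lambda>S. if S = {a, b} \<and> a \<noteq> b then wsign {a} {b} else 0)"
proof (rule ext)
  fix S show "(e a \<^bold>\<and> e b) S = (if S = {a, b} \<and> a \<noteq> b then wsign {a} {b} else 0)"
  proof (cases "finite S")
    case True
    have "(e a \<^bold>\<and> e b) S = (\<Sum>A\<in>Pow S. if {a} = A then wsign {a} (S - {a}) * e b (S - {a}) else 0)"
      unfolding wedge_apply[OF True] by (rule sum.cong) (auto simp: e_apply)
    also have "\<dots> = (if a \<in> S then wsign {a} (S - {a}) * e b (S - {a}) else 0)"
      using True by simp
    also have "\<dots> = (if S = {a, b} \<and> a \<noteq> b then wsign {a} {b} else 0)"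
      by (auto simp: e_apply)
    finally show ?thesis .
  next
    case False
    hence "S \<noteq> {a, b}" by auto
    thus ?thesis using False by (simp add: wedge_inf)
  qed
qed

lemma sgnpow_neg: "sgnpow (-a) = sgnpow a" by (simp add: sgnpow_def)
lemma sgnpow_reflect: "sgnpow (-a-1) = - sgnpow a" by (simp add: sgnpow_def)
lemma sgnpow_mult_self: "sgnpow a * sgnpow a = 1" by (simp add: sgnpow_def)

lemma Xe_eq: "a < 0 \<Longrightarrow> Xe a = (\<lambda>S. if S = {a, -a-1} then - sgnpow a else 0)"
proof -
  assume a: "a < 0"
  have "{x \<in> {a}. x < -a-1} = {a}" using a by auto
  hence w: "wsign {a} {-a-1} = -1" by (simp add: wsign_single_right)
  show ?thesis unfolding Xe_def e_wedge_e using a w by (auto simp: ext_smult_def fun_eq_iff)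
qed

lemma Xe_apply: "a < 0 \<Longrightarrow> Xe a S = (if S = {a, -a-1} then - sgnpow a else 0)"
  by (simp add: Xe_eq)

lemma Xe_even: "even_ext (Xe a)"
  unfolding Xe_def e_wedge_e even_ext_def ext_smult_def by auto

lemma Xe_contains: "a < 0 \<Longrightarrow> contains a (Xe a)"
  by (auto simp: contains_def Xe_apply)
lemma Xe_contains_reflect: "a < 0 \<Longrightarrow> contains (-a-1) (Xe a)"
  by (auto simp: contains_def Xe_apply)
lemma Xe_avoids: "a < 0 \<Longrightarrow> k \<noteq> a \<Longrightarrow> k \<noteq> -a-1 \<Longrightarrow> avoids k (Xe a)"
  by (auto simp: avoids_def Xe_apply)
lemma Xe_wedge_self: "a < 0 \<Longrightarrow> Xe a \<^bold>\<and> Xe a = 0"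
  by (rule contains_wedge_eq_0) (auto intro: Xe_contains)

lemma psi_dag_e: "psi_dag a (e a) = ext_one"
  by (auto simp: fun_eq_iff psi_dag_def e_def ext_one_def)

lemma psi_dag_Xe: "a < 0 \<Longrightarrow> psi_dag (-a-1) (Xe a) = ext_smult (- sgnpow a) (e a)"
proof
  fix S assume a: "a < 0"
  have "-a-1 \<notin> S \<and> insert (-a-1) S = {a, -a-1} \<longleftrightarrow> S = {a}"
    using a by (auto simp: insert_eq_iff)
  moreover have none_above: "{s. s = a \<and> -a-1 < s} = {}" using a by auto
  ultimately show "psi_dag (-a-1) (Xe a) S = ext_smult (- sgnpow a) (e a) S"
    using a by (auto simp: psi_dag_def Xe_apply e_def ext_smult_def none_above)
qed

lemma psi_dag_psi_dag_Xe:
  "a < 0 \<Longrightarrow> psi_dag a (psi_dag (-a-1) (Xe a)) = ext_smult (- sgnpow a) ext_one"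
  by (simp add: psi_dag_Xe psi_dag_smult psi_dag_e)

lemma omega_hat_dag_add: "omega_hat_dag N (x + y) = omega_hat_dag N x + omega_hat_dag N y"
  by (simp add: omega_hat_dag_def psi_dag_add ext_smult_add sum.distrib)
lemma omega_hat_dag_smult: "omega_hat_dag N (ext_smult c x) = ext_smult c (omega_hat_dag N x)"
  by (simp add: omega_hat_dag_def psi_dag_smult ext_smult_smult ext_smult_sum mult.commute)
lemma omega_hat_dag_zero[simp]: "omega_hat_dag N 0 = 0"
  by (simp add: omega_hat_dag_def)
lemma omega_hat_dag_sum: "finite I \<Longrightarrow> omega_hat_dag N (\<Sum>i\<in>I. f i) = (\<Sum>i\<in>I. omega_hat_dag N (f i))"
proof (induct I rule: finite_induct)
  case empty show ?case by (simp only: sum.empty omega_hat_dag_zero)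
next
  case (insert x F) show ?case
    by (simp only: sum.insert[OF insert(1,2)] omega_hat_dag_add insert(3))
qed

lemma omega_hat_dag_Xe_wedge:
  assumes a: "a \<in> {-int N..-1}" and av: "avoids a y" "avoids (-a-1) y" and fy: "fin_supp y"
  shows "omega_hat_dag N (Xe a \<^bold>\<and> y) = y + Xe a \<^bold>\<and> omega_hat_dag N y"
proof -
  have a0: "a < 0" using a by auto
  have ev: "grade_inv (Xe a) = Xe a" using Xe_even by (rule grade_inv_even)
  \<comment> \<open>only the summand i = -a-1 of omega_hat_dag can contract both indices of X_a\<close>
  have step: "ext_smult (sgnpow i) (psi_dag (-i-1) (psi_dag i (Xe a \<^bold>\<and> y)))
     = (if i = -a-1 then y else 0) + Xe a \<^bold>\<and> ext_smult (sgnpow i) (psi_dag (-i-1) (psi_dag i y))"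
    if i: "i \<in> {0..int N - 1}" for i
  proof -
    have exp: "psi_dag (-i-1) (psi_dag i (Xe a \<^bold>\<and> y)) =
       psi_dag (-i-1) (psi_dag i (Xe a)) \<^bold>\<and> y + grade_inv (psi_dag i (Xe a)) \<^bold>\<and> psi_dag (-i-1) y
       + (psi_dag (-i-1) (Xe a) \<^bold>\<and> psi_dag i y + Xe a \<^bold>\<and> psi_dag (-i-1) (psi_dag i y))"
      by (simp add: psi_dag_wedge ev psi_dag_add)
    show ?thesis
    proof (cases "i = -a-1")
      case True
      have z: "psi_dag a y = 0" "psi_dag (-a-1) y = 0" using av by (simp_all add: psi_dag_avoids)
      have hP: "psi_dag a (psi_dag (-a-1) (Xe a)) \<^bold>\<and> y = ext_smult (- sgnpow a) y"
        using psi_dag_psi_dag_Xe[OF a0] wedge_one_left[OF fy] by (simp add: wedge_smult_left)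
      have ii2: "- (- a - 1) - 1 = a" by simp
      show ?thesis unfolding exp unfolding True ii2 using z hP
        by (simp add: ext_smult_add ext_smult_smult wedge_smult_right sgnpow_reflect sgnpow_mult_self)
    next
      case False
      have "i \<noteq> a" using i a by auto
      hence z: "psi_dag i (Xe a) = 0" "psi_dag (-i-1) (Xe a) = 0"
        using False a0 by (auto intro!: psi_dag_avoids Xe_avoids)
      show ?thesis unfolding exp z grade_inv_zero using False
        by (simp add: wedge_smult_right)
    qed
  qed
  have "omega_hat_dag N (Xe a \<^bold>\<and> y) = (\<Sum>i\<in>{0..int N - 1}. (if i = -a-1 then y else 0)
      + Xe a \<^bold>\<and> ext_smult (sgnpow i) (psi_dag (-i-1) (psi_dag i y)))"
    unfolding omega_hat_dag_def by (rule sum.cong) (simp_all add: step)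
  also have "\<dots> = y + Xe a \<^bold>\<and> omega_hat_dag N y"
    unfolding sum.distrib omega_hat_dag_def wedge_sum_right using a
      by (simp add: if_distrib cong: if_cong)
  finally show ?thesis .
qed

lemma Xe_wedge_commute: "Xe a \<^bold>\<and> (Xe b \<^bold>\<and> y) = Xe b \<^bold>\<and> (Xe a \<^bold>\<and> y)"
  by (simp add: wedge_assoc[symmetric] wedge_comm_even[OF Xe_even, of a "Xe b"])

definition Xprod :: "int set \<Rightarrow> ext" where
  "Xprod T = Finite_Set.fold (\<lambda>a y. Xe a \<^bold>\<and> y) ext_one T"

lemma Xprod_empty[simp]: "Xprod {} = ext_one" by (simp add: Xprod_def)

lemma Xprod_insert: "finite T \<Longrightarrow> a \<notin> T \<Longrightarrow> Xprod (insert a T) = Xe a \<^bold>\<and> Xprod T"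
proof -
  assume a: "finite T" "a \<notin> T"
  interpret c: comp_fun_commute "\<lambda>a y. Xe a \<^bold>\<and> y"
    by unfold_locales (simp add: fun_eq_iff Xe_wedge_commute)
  show ?thesis unfolding Xprod_def using a by simp
qed

lemma Xe_wedge_Xprod_mem: "finite T \<Longrightarrow> a \<in> T \<Longrightarrow> a < 0 \<Longrightarrow> Xe a \<^bold>\<and> Xprod T = 0"
proof -
  assume a: "finite T" "a \<in> T" "a < 0"
  have "Xprod T = Xe a \<^bold>\<and> Xprod (T - {a})" using a Xprod_insert[of "T - {a}" a]
    by (simp add: insert_absorb)
  thus ?thesis by (simp add: wedge_assoc[symmetric] Xe_wedge_self[OF a(3)])
qed

lemma avoids_ext_one: "avoids k ext_one" by (simp add: avoids_def ext_one_def)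

lemma Xprod_avoids:
  assumes "finite T" "\<forall>b\<in>T. b < 0 \<and> b \<noteq> a" "a < 0"
  shows "avoids a (Xprod T) \<and> avoids (-a-1) (Xprod T)"
  using assms
proof (induct T rule: finite_induct)
  case empty thus ?case by (simp add: avoids_ext_one)
next
  case (insert b F)
  have "avoids a (Xe b)" "avoids (-a-1) (Xe b)" using insert by (auto intro!: Xe_avoids)
  thus ?case using insert by (simp add: Xprod_insert avoids_wedge)
qed

lemma foldr_e_nonzero: "foldr (\<^bold>\<and>) (map e xs) ext_one S \<noteq> 0 \<Longrightarrow> S = set xs"
proof (induct xs arbitrary: S)
  case Nil thus ?case by (simp add: ext_one_def split: if_splits)
next
  case (Cons x xs)
  from Cons(2) have "(e x \<^bold>\<and> foldr (\<^bold>\<and>) (map e xs) ext_one) S \<noteq> 0" by simp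
  then obtain A where A: "A \<subseteq> S" "e x A \<noteq> 0" "foldr (\<^bold>\<and>) (map e xs) ext_one (S - A) \<noteq> 0"
    using wedge_nonzero_split by blast
  have "A = {x}" using A(2) by (simp add: e_apply split: if_splits)
  moreover have "S - A = set xs" using Cons(1) A(3) by blast
  ultimately show ?case using A(1) by auto
qed

lemma fin_supp_foldr: "fin_supp z \<Longrightarrow> fin_supp (foldr (\<^bold>\<and>) xs z)"
  by (cases xs) (simp_all add: fin_supp_wedge)

lemma foldr_wedge_assoc: "foldr (\<^bold>\<and>) xs z \<^bold>\<and> w = foldr (\<^bold>\<and>) xs (z \<^bold>\<and> w)"
  by (induct xs) (simp_all add: wedge_assoc)

section \<open>The monomials X_S \<and> e_K\<close>

locale Kbar_setup =
  fixes N :: nat and K :: "int set"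
  assumes KN: "K \<in> Kset N"
begin

abbreviation Kb :: "int set" where "Kb \<equiv> Kbar N K"
abbreviation Dag :: "ext \<Rightarrow> ext" where "Dag \<equiv> omega_hat_dag N"
abbreviation omK :: ext where "omK \<equiv> omega_Kbar N K"

lemma K_subset: "K \<subseteq> {-int N..int N - 1}" using KN by (simp add: Kset_def)
lemma K_finite: "finite K" using K_subset finite_subset by blast
lemma K_reflect_notin: "k \<in> K \<Longrightarrow> -k-1 \<notin> K"
proof
  assume "k \<in> K" "-k-1 \<in> K"
  hence "k \<in> K \<inter> ((\<lambda>k. -k-1) ` K)" by (auto intro!: image_eqI[of _ _ "-k-1"])
  thus False using KN unfolding Kset_def by blast
qed
lemma Kbar_subset: "Kb \<subseteq> {-int N..-1}" by (auto simp: Kbar_def)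
lemma Kbar_finite: "finite Kb" by (simp add: Kbar_def)
lemma Kbar_neg: "a \<in> Kb \<Longrightarrow> a < 0" by (auto simp: Kbar_def)
lemma Kbar_notin_K: "a \<in> Kb \<Longrightarrow> a \<notin> K" by (auto simp: Kbar_def)
lemma Kbar_reflect_notin_K: "a \<in> Kb \<Longrightarrow> -a-1 \<notin> K"
  by (auto simp: Kbar_def image_iff)
lemma not_Kbar_in_K: "a \<in> {-int N..-1} \<Longrightarrow> a \<notin> Kb \<Longrightarrow> a \<in> K \<or> -a-1 \<in> K"
  by (auto simp: Kbar_def image_iff)

abbreviation eK :: ext where "eK \<equiv> eset K"

lemma eK_nonzero: "eK S \<noteq> 0 \<Longrightarrow> S = K"
proof -
  assume "eK S \<noteq> 0"
  hence "S = set (rev (sorted_list_of_set K))"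
    unfolding eset_def wedge_list_def by (rule foldr_e_nonzero)
  thus ?thesis using K_finite by simp
qed
lemma eK_contains: "k \<in> K \<Longrightarrow> contains k eK" using eK_nonzero by (auto simp: contains_def)
lemma eK_avoids: "k \<notin> K \<Longrightarrow> avoids k eK" using eK_nonzero by (auto simp: avoids_def)
lemma eK_fin_supp: "fin_supp eK" unfolding eset_def wedge_list_def
  by (rule fin_supp_foldr[OF fin_supp_one])

lemma omega_hat_dag_eK: "Dag eK = 0"
proof -
  have "psi_dag (-i-1) (psi_dag i eK) = 0" for i
  proof (cases "i \<in> K")
    case True
    hence "avoids (-i-1) eK" using K_reflect_notin eK_avoids by blast
    hence "avoids (-i-1) (psi_dag i eK)" by (rule avoids_psi_dag) presburger
    thus ?thesis by (rule psi_dag_avoids)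
  next
    case False thus ?thesis using eK_avoids psi_dag_avoids by simp
  qed
  thus ?thesis by (simp add: omega_hat_dag_def)
qed

definition XeK :: "int set \<Rightarrow> ext" where "XeK T = Xprod T \<^bold>\<and> eK"

lemma XeK_fin_supp: "fin_supp (XeK T)" by (simp add: XeK_def fin_supp_wedge)

lemma Xe_wedge_XeK: "a \<in> Kb \<Longrightarrow> T \<subseteq> Kb \<Longrightarrow> Xe a \<^bold>\<and> XeK T = (if a \<in> T then 0 else XeK (insert a T))"
proof -
  assume a: "a \<in> Kb" "T \<subseteq> Kb"
  have fT: "finite T" using a(2) Kbar_finite finite_subset by blast
  show ?thesis unfolding XeK_def wedge_assoc[symmetric]
    using Xe_wedge_Xprod_mem[OF fT _ Kbar_neg[OF a(1)]] Xprod_insert[OF fT] by auto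
qed

lemma XeK_avoids: "T \<subseteq> Kb \<Longrightarrow> a \<in> Kb - T \<Longrightarrow> avoids a (XeK T) \<and> avoids (-a-1) (XeK T)"
proof -
  assume a: "T \<subseteq> Kb" "a \<in> Kb - T"
  have fT: "finite T" using a(1) Kbar_finite finite_subset by blast
  have x: "avoids a (Xprod T) \<and> avoids (-a-1) (Xprod T)"
    by (rule Xprod_avoids[OF fT]) (use a Kbar_neg in auto)
  have "avoids a eK" "avoids (-a-1) eK" using a Kbar_notin_K Kbar_reflect_notin_K eK_avoids by auto
  thus ?thesis using x by (simp add: XeK_def avoids_wedge)
qed

lemma omega_hat_dag_XeK_empty: "Dag (XeK {}) = 0"
  by (simp add: XeK_def wedge_one_left[OF eK_fin_supp] omega_hat_dag_eK)

lemma omega_hat_dag_XeK: "T \<subseteq> Kb \<Longrightarrow> Dag (XeK T) = (\<Sum>b\<in>T. XeK (T - {b}))"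
proof -
  assume T: "T \<subseteq> Kb"
  have fT: "finite T" using T Kbar_finite finite_subset by blast
  show ?thesis using fT T
  proof (induct T rule: finite_subset_induct')
    case empty thus ?case by (simp add: omega_hat_dag_XeK_empty)
  next
    case (insert a F)
    have aN: "a \<in> {-int N..-1}" using insert Kbar_subset by auto
    have av: "avoids a (XeK F)" "avoids (-a-1) (XeK F)" using XeK_avoids[of F a] insert by auto
    have "XeK (insert a F) = Xe a \<^bold>\<and> XeK F" using Xe_wedge_XeK[of a F] insert by simp
    hence "Dag (XeK (insert a F)) = XeK F + Xe a \<^bold>\<and> Dag (XeK F)"
      using omega_hat_dag_Xe_wedge[OF aN av XeK_fin_supp] by simp
    also have "\<dots> = XeK F + (\<Sum>b\<in>F. XeK (insert a (F - {b})))"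
      unfolding insert(5) wedge_sum_right
    proof (rule arg_cong[where f="\<lambda>t. XeK F + t"], rule sum.cong[OF refl])
      fix b assume "b \<in> F"
      thus "Xe a \<^bold>\<and> XeK (F - {b}) = XeK (insert a (F - {b}))" using Xe_wedge_XeK[of a "F
          - {b}"] insert by auto
    qed
    also have "\<dots> = (\<Sum>b\<in>insert a F. XeK (insert a F - {b}))"
      using insert by (intro sum_remove_from_insert[symmetric]) auto
    finally show ?case .
  qed
qed

lemma omega_Kbar_eq: "omK = (\<Sum>a\<in>Kb. Xe a)"
proof -
  let ?xs = "sorted_list_of_set Kb"
  have b1: "bij_betw (\<lambda>a. a - 1) {1..card Kb} {..<card Kb}"
  proof (rule bij_betw_imageI)
    show "inj_on (\<lambda>a. a - 1) {1..card Kb}" by (auto simp: inj_on_def)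
    show "(\<lambda>a. a - 1) ` {1..card Kb} = {..<card Kb}"
    proof
      show "{..<card Kb} \<subseteq> (\<lambda>a. a - 1) ` {1..card Kb}"
      proof
        fix k assume "k \<in> {..<card Kb}"
        thus "k \<in> (\<lambda>a. a - 1) ` {1..card Kb}" by (intro image_eqI[of _ _ "Suc k"]) auto
      qed
    qed auto
  qed
  have b2: "bij_betw ((!) ?xs) {..<card Kb} Kb"
    by (rule bij_betw_nth) (simp_all add: Kbar_finite)
  have "bij_betw (\<lambda>a. ?xs ! (a - 1)) {1..card Kb} Kb"
    using bij_betw_trans[OF b1 b2] by (simp add: comp_def)
  thus ?thesis unfolding omega_Kbar_def Kbar_nth_def
    by (rule sum.reindex_bij_betw)
qed

lemma omegaN_eq: "omegaN N = (\<Sum>a\<in>{-int N..-1}. Xe a)"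
  unfolding omegaN_def
  by (rule sum.reindex_bij_witness[where i=uminus and j=uminus])
     (auto simp: Xe_def sgnpow_neg)

lemma omega_Kbar_wedge_XeK: "T \<subseteq> Kb \<Longrightarrow> omK \<^bold>\<and> XeK T = (\<Sum>a\<in>Kb - T. XeK (insert a T))"
proof -
  assume T: "T \<subseteq> Kb"
  have "omK \<^bold>\<and> XeK T = (\<Sum>a\<in>Kb. if a \<in> T then 0 else XeK (insert a T))"
    unfolding omega_Kbar_eq wedge_sum_left by (rule sum.cong) (use T in \<open>auto simp: Xe_wedge_XeK\<close>)
  also have "\<dots> = (\<Sum>a\<in>Kb - T. XeK (insert a T))"
    using Kbar_finite by (simp add: sum.If_cases Diff_eq)
  finally show ?thesis .
qed

lemma omegaN_wedge_XeK: "T \<subseteq> Kb \<Longrightarrow> omegaN N \<^bold>\<and> XeK T = omK \<^bold>\<and> XeK T"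
proof -
  assume T: "T \<subseteq> Kb"
  \<comment> \<open>for a outside K-bar, X_a and e_K share an index of K\<close>
  have z: "Xe a \<^bold>\<and> XeK T = 0" if a: "a \<in> {-int N..-1} - Kb" for a
  proof -
    have a0: "a < 0" using a by auto
    obtain k where k: "k \<in> K" "contains k (Xe a)"
      using not_Kbar_in_K[of a] a Xe_contains[OF a0] Xe_contains_reflect[OF a0] by auto
    have "contains k (XeK T)" unfolding XeK_def
      by (rule contains_wedge_right, rule eK_contains, fact)
    thus ?thesis using k by (simp add: contains_wedge_eq_0)
  qed
  have "omegaN N \<^bold>\<and> XeK T = (\<Sum>a\<in>{-int N..-1}. Xe a \<^bold>\<and> XeK T)"
    unfolding omegaN_eq wedge_sum_left ..
  also have "\<dots> = (\<Sum>a\<in>{-int N..-1} - Kb. Xe a \<^bold>\<and> XeK T) + (\<Sum>a\<in>Kb. Xe a \<^bold>\<and> XeK T)"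
    by (rule sum.subset_diff) (use Kbar_subset in auto)
  also have "\<dots> = (\<Sum>a\<in>Kb. Xe a \<^bold>\<and> XeK T)" using z by simp
  also have "\<dots> = omK \<^bold>\<and> XeK T" unfolding omega_Kbar_eq wedge_sum_left ..
  finally show ?thesis .
qed

inductive homog :: "nat \<Rightarrow> ext \<Rightarrow> bool" where
  zero: "homog d 0"
| XeK: "T \<subseteq> Kb \<Longrightarrow> card T = d \<Longrightarrow> homog d (XeK T)"
| add: "homog d x \<Longrightarrow> homog d y \<Longrightarrow> homog d (x + y)"
| smult: "homog d x \<Longrightarrow> homog d (ext_smult c x)"

lemma homog_sum: "finite I \<Longrightarrow> (\<And>i. i \<in> I \<Longrightarrow> homog d (f i)) \<Longrightarrow> homog d (\<Sum>i\<in>I. f i)"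
proof (induct I rule: finite_induct)
  case empty show ?case by (simp only: sum.empty) (rule homog.zero)
next
  case (insert x F) show ?case unfolding sum.insert[OF insert(1,2)]
    by (rule homog.add) (use insert in auto)
qed

lemma homog_fin_supp: "homog d y \<Longrightarrow> fin_supp y"
  by (induct rule: homog.induct) (auto simp: fin_supp_def XeK_fin_supp[unfolded fin_supp_def] ext_smult_def)

lemma homog_Xe_wedge:
  assumes "homog d y" and a: "a \<in> Kb"
  shows "homog (Suc d) (Xe a \<^bold>\<and> y)"
  using assms(1)
proof (induct rule: homog.induct)
  case (zero d) show ?case by (simp only: wedge_zero_right) (rule homog.zero)
next
  case (XeK T d)
  have "finite T" using XeK Kbar_finite finite_subset by blast
  then show ?case using XeK a Xe_wedge_XeK[of a T] by (auto intro: homog.zero homog.XeK)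
next
  case (add d x y) show ?case unfolding wedge_add_right by (rule homog.add[OF add(2) add(4)])
next
  case (smult d x c) thus ?case by (simp add: wedge_smult_right homog.smult)
qed

lemma homog_omega_Kbar_wedge: "homog d y \<Longrightarrow> homog (Suc d) (omK \<^bold>\<and> y)"
proof (induct rule: homog.induct)
  case (zero d) show ?case by (simp only: wedge_zero_right) (rule homog.zero)
next
  case (XeK T d)
  have fT: "finite T" using XeK Kbar_finite finite_subset by blast
  show ?case unfolding omega_Kbar_wedge_XeK[OF XeK(1)]
    by (rule homog_sum) (use XeK fT Kbar_finite in \<open>auto intro!: homog.XeK\<close>)
next
  case (add d x y) show ?case unfolding wedge_add_right by (rule homog.add[OF add(2) add(4)])
next
  case (smult d x c) thus ?case by (simp add: wedge_smult_right homog.smult)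
qed

lemma homog_omegaN_wedge: "homog d y \<Longrightarrow> omegaN N \<^bold>\<and> y = omK \<^bold>\<and> y"
proof (induct rule: homog.induct)
  case (XeK T d) thus ?case by (simp add: omegaN_wedge_XeK)
next
  case (add d x y) thus ?case by (simp only: wedge_add_right)
next
  case (smult d x c) thus ?case by (simp only: wedge_smult_right)
qed (simp only: wedge_zero_right)

lemma homog_eq_0_above: "homog d y \<Longrightarrow> card Kb < d \<Longrightarrow> y = 0"
proof (induct rule: homog.induct)
  case (XeK T d)
  have "card T \<le> card Kb" by (rule card_mono[OF Kbar_finite XeK(1)])
  thus ?case using XeK by simp
qed simp_all

lemma omega_hat_dag_diff: "Dag (x - y) = Dag x - Dag y"
  by (simp add: diff_eq_add_ext_smult omega_hat_dag_add omega_hat_dag_smult)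

lemma omega_hat_dag_omega_Kbar_wedge_XeK:
  assumes T: "T \<subseteq> Kb"
  shows "Dag (omK \<^bold>\<and> XeK T) = ext_smult (real (card (Kb - T))) (XeK T)
    + (\<Sum>a\<in>Kb - T. \<Sum>b\<in>T. XeK (insert a (T - {b})))"
proof -
  have fT: "finite T" using T Kbar_finite finite_subset by blast
  have "Dag (omK \<^bold>\<and> XeK T) = (\<Sum>a\<in>Kb - T. Dag (XeK (insert a T)))"
    unfolding omega_Kbar_wedge_XeK[OF T] using Kbar_finite by (simp add: omega_hat_dag_sum)
  also have "\<dots> = (\<Sum>a\<in>Kb - T. XeK T + (\<Sum>b\<in>T. XeK (insert a (T - {b}))))"
  proof (rule sum.cong[OF refl])
    fix a assume a: "a \<in> Kb - T"
    have "Dag (XeK (insert a T)) = (\<Sum>b\<in>insert a T. XeK (insert a T - {b}))"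
      using a T by (intro omega_hat_dag_XeK) auto
    also have "\<dots> = XeK T + (\<Sum>b\<in>T. XeK (insert a (T - {b})))"
      using a fT by (intro sum_remove_from_insert) auto
    finally show "Dag (XeK (insert a T)) = XeK T + (\<Sum>b\<in>T. XeK (insert a (T - {b})))" .
  qed
  finally show ?thesis unfolding sum.distrib sum_const_ext .
qed

lemma omega_Kbar_wedge_omega_hat_dag_XeK:
  assumes T: "T \<subseteq> Kb"
  shows "omK \<^bold>\<and> Dag (XeK T) = ext_smult (real (card T)) (XeK T)
    + (\<Sum>a\<in>Kb - T. \<Sum>b\<in>T. XeK (insert a (T - {b})))"
proof -
  have "omK \<^bold>\<and> Dag (XeK T) = (\<Sum>b\<in>T. omK \<^bold>\<and> XeK (T - {b}))"
    unfolding omega_hat_dag_XeK[OF T] wedge_sum_right ..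
  also have "\<dots> = (\<Sum>b\<in>T. XeK T + (\<Sum>a\<in>Kb - T. XeK (insert a (T - {b}))))"
  proof (rule sum.cong[OF refl])
    fix b assume b: "b \<in> T"
    have "omK \<^bold>\<and> XeK (T - {b}) = (\<Sum>a\<in>Kb - (T - {b}). XeK (insert a (T - {b})))"
      using T by (intro omega_Kbar_wedge_XeK) auto
    also have "Kb - (T - {b}) = insert b (Kb - T)" using b T by auto
    also have "(\<Sum>a\<in>insert b (Kb - T). XeK (insert a (T - {b})))
        = XeK (insert b (T - {b})) + (\<Sum>a\<in>Kb - T. XeK (insert a (T - {b})))"
      using b Kbar_finite by (simp add: sum.insert)
    also have "insert b (T - {b}) = T" using b by auto
    finally show "omK \<^bold>\<and> XeK (T - {b}) = XeK T + (\<Sum>a\<in>Kb - T. XeK (insert a (T - {b})))" .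
  qed
  finally show ?thesis unfolding sum.distrib sum_const_ext by (simp add: sum.swap[of _ T])
qed

lemma commutator_XeK:
  assumes T: "T \<subseteq> Kb"
  shows "Dag (omK \<^bold>\<and> XeK T) = omK \<^bold>\<and> Dag (XeK T) + ext_smult (real (card Kb)
      - 2 * real (card T)) (XeK T)"
proof -
  have card_diff: "real (card (Kb - T)) = real (card Kb) - real (card T)"
    using card_Diff_subset[OF finite_subset[OF T Kbar_finite] T] card_mono[OF Kbar_finite T] by simp
  show ?thesis
    unfolding omega_hat_dag_omega_Kbar_wedge_XeK[OF T] omega_Kbar_wedge_omega_hat_dag_XeK[OF T] card_diff
    by (simp add: fun_eq_iff ext_smult_def algebra_simps)
qed

lemma homog_commutator:
  "homog d y \<Longrightarrow> Dag (omK \<^bold>\<and> y) = omK \<^bold>\<and> Dag y + ext_smult (real (card Kb) - 2 * real d) y"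
proof (induct rule: homog.induct)
  case (zero d) show ?case
    by (simp only: wedge_zero_right omega_hat_dag_zero ext_smult_zero add_0_right)
next
  case (XeK T d) thus ?case using commutator_XeK by simp
next
  case (add d x y) show ?case
    unfolding wedge_add_right omega_hat_dag_add add(2) add(4) ext_smult_add by (simp only: add_ac)
next
  case (smult d x c) show ?case
    unfolding wedge_smult_right omega_hat_dag_smult smult(2) ext_smult_add ext_smult_smult
      by (simp only: mult.commute)
qed

end

section \<open>The string through V_T \<and> e_K\<close>

locale tableau_setup = Kbar_setup +
  fixes l :: nat and T :: "nat \<Rightarrow> nat \<Rightarrow> nat"
  assumes TS: "T \<in> SYT (card (Kbar N K)) l"
begin

abbreviation m :: nat where "m \<equiv> card Kb"

definition alpha :: "nat \<Rightarrow> int" where "alpha i = Kbar_nth N K (T i 1)"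
definition beta :: "nat \<Rightarrow> int" where "beta i = Kbar_nth N K (T i 2)"
definition Yrow :: "nat \<Rightarrow> ext" where "Yrow i = Xe (alpha i) - Xe (beta i)"

lemma two_l_le: "2 * l \<le> m" using TS by (simp add: SYT_def)

lemma T_bij: "bij_betw (\<lambda>(i, c). T i c) (syt_cells m l) {1..m}" using TS by (simp add: SYT_def)

lemma row_cell: "1 \<le> i \<Longrightarrow> i \<le> l \<Longrightarrow> c \<in> {1, 2} \<Longrightarrow> (i, c) \<in> syt_cells m l"
  by (auto simp: syt_cells_def)

lemma T_range: "1 \<le> i \<Longrightarrow> i \<le> l \<Longrightarrow> c \<in> {1, 2} \<Longrightarrow> T i c \<in> {1..m}"
proof -
  assume a: "1 \<le> i" "i \<le> l" "c \<in> {1, 2}"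
  have img: "(\<lambda>(i, c). T i c) ` syt_cells m l = {1..m}" using T_bij by (simp add: bij_betw_def)
  have "(\<lambda>(i, c). T i c) (i, c) \<in> (\<lambda>(i, c). T i c) ` syt_cells m l"
    by (rule imageI[OF row_cell[OF a]])
  thus ?thesis unfolding img by simp
qed

lemma T_row_inj: "1 \<le> i \<Longrightarrow> i \<le> l \<Longrightarrow> c \<in> {1, 2} \<Longrightarrow> 1 \<le> i' \<Longrightarrow> i' \<le> l \<Longrightarrow> c' \<in> {1, 2} \<Longrightarrow>
   T i c = T i' c' \<Longrightarrow> i = i'"
proof -
  assume a: "1 \<le> i" "i \<le> l" "c \<in> {1, 2}" "1 \<le> i'" "i' \<le> l" "c' \<in> {1, 2}" "T i c = T i' c'"
  have inj: "inj_on (\<lambda>(i, c). T i c) (syt_cells m l)" using T_bij by (simp add: bij_betw_def)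
  have "(i, c) = (i', c')"
    by (rule inj_onD[OF inj]) (use a row_cell in auto)
  thus ?thesis by simp
qed

lemma Kbar_nth_mem: "k \<in> {1..m} \<Longrightarrow> Kbar_nth N K k \<in> Kb"
proof -
  assume k: "k \<in> {1..m}"
  have "k - 1 < length (sorted_list_of_set Kb)" using k by auto
  hence "sorted_list_of_set Kb ! (k - 1) \<in> set (sorted_list_of_set Kb)" by (rule nth_mem)
  thus ?thesis using Kbar_finite by (simp add: Kbar_nth_def)
qed

lemma Kbar_nth_inj: "k \<in> {1..m} \<Longrightarrow> k' \<in> {1..m} \<Longrightarrow> Kbar_nth N K k = Kbar_nth N K k' \<Longrightarrow> k = k'"
proof -
  assume k: "k \<in> {1..m}" "k' \<in> {1..m}" "Kbar_nth N K k = Kbar_nth N K k'"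
  have "distinct (sorted_list_of_set Kb)" by simp
  hence "k - 1 = k' - 1" using k by (auto simp: Kbar_nth_def nth_eq_iff_index_eq)
  thus ?thesis using k by auto
qed

lemma alpha_beta_mem: "i \<in> {1..l} \<Longrightarrow> alpha i \<in> Kb \<and> beta i \<in> Kb"
  by (auto simp: alpha_def beta_def intro!: Kbar_nth_mem T_range)

lemma alpha_beta_distinct:
  assumes "i \<in> {1..l}" "j \<in> {1..l}" "i \<noteq> j" "k \<in> {alpha i, beta i}"
  shows "k \<noteq> alpha j \<and> k \<noteq> beta j"
proof -
  have ne: "Kbar_nth N K (T i c) \<noteq> Kbar_nth N K (T j c')" if c: "c \<in> {1,2}" "c' \<in> {1,2}" for c c'
  proof
    assume eq: "Kbar_nth N K (T i c) = Kbar_nth N K (T j c')"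
    have v: "T i c \<in> {1..m}" "T j c' \<in> {1..m}" using T_range[of i c] T_range[of j c'] assms c
      by auto
    have "T i c = T j c'" by (rule Kbar_nth_inj[OF v eq])
    hence "i = j" using T_row_inj[of i c j c'] assms c by auto
    thus False using assms(3) by simp
  qed
  show ?thesis using ne[of 1 1] ne[of 1 2] ne[of 2 1] ne[of 2 2] assms(4)
    unfolding alpha_def beta_def by auto
qed

lemma homog_Yrow_wedge: "a \<in> {1..l} \<Longrightarrow> homog d y \<Longrightarrow> homog (Suc d) (Yrow a \<^bold>\<and> y)"
proof -
  assume a: "a \<in> {1..l}" "homog d y"
  have "Yrow a \<^bold>\<and> y = Xe (alpha a) \<^bold>\<and> y + ext_smult (-1) (Xe (beta a) \<^bold>\<and> y)"
    unfolding Yrow_def wedge_diff_left by (rule diff_eq_add_ext_smult)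
  moreover have "homog (Suc d) (Xe (alpha a) \<^bold>\<and> y + ext_smult (-1) (Xe (beta a) \<^bold>\<and> y))"
    using alpha_beta_mem[OF a(1)] by (intro homog.add homog.smult homog_Xe_wedge a(2)) auto
  ultimately show ?thesis by simp
qed

definition Vrows :: "nat list \<Rightarrow> ext" where "Vrows rs = foldr (\<^bold>\<and>) (map Yrow rs) (XeK {})"

lemma homog_Vrows: "set rs \<subseteq> {1..l} \<Longrightarrow> homog (length rs) (Vrows rs)"
proof (induct rs)
  case Nil show ?case unfolding Vrows_def by (simp, rule homog.XeK) auto
next
  case (Cons a rs) thus ?case unfolding Vrows_def by (simp add: homog_Yrow_wedge)
qed

lemma Vrows_fin_supp: "fin_supp (Vrows rs)" unfolding Vrows_def
  by (rule fin_supp_foldr[OF XeK_fin_supp])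

lemma Vrows_avoids: "set rs \<subseteq> {1..l} \<Longrightarrow> i \<in> {1..l} \<Longrightarrow> i \<notin> set rs \<Longrightarrow> k \<in> {alpha i, beta i} \<Longrightarrow>
   avoids k (Vrows rs) \<and> avoids (-k-1) (Vrows rs)"
proof (induct rs)
  case Nil
  have "k \<in> Kb" using Nil alpha_beta_mem by auto
  thus ?case unfolding Vrows_def using XeK_avoids[of "{}" k] by simp
next
  case (Cons j rs)
  have j: "j \<in> {1..l}" "i \<noteq> j" using Cons by auto
  have d: "k \<noteq> alpha j \<and> k \<noteq> beta j" using alpha_beta_distinct[OF Cons(3) j(1) j(2) Cons(5)] .
  have kB: "k \<in> Kb" using Cons alpha_beta_mem by auto
  have k0: "k < 0" by (rule Kbar_neg[OF kB])
  have j0: "alpha j < 0" "beta j < 0" using alpha_beta_mem[OF j(1)] Kbar_neg by auto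
  have "avoids k (Yrow j) \<and> avoids (-k-1) (Yrow j)" unfolding Yrow_def
    using d k0 j0 by (auto intro!: avoids_diff Xe_avoids)
  moreover have "avoids k (Vrows rs) \<and> avoids (-k-1) (Vrows rs)" using Cons by auto
  ultimately show ?case unfolding Vrows_def by (simp add: avoids_wedge)
qed

lemma omega_hat_dag_Vrows: "distinct rs \<Longrightarrow> set rs \<subseteq> {1..l} \<Longrightarrow> Dag (Vrows rs) = 0"
proof (induct rs)
  case Nil show ?case unfolding Vrows_def by (simp add: omega_hat_dag_XeK_empty)
next
  case (Cons i rs)
  have i: "i \<in> {1..l}" "i \<notin> set rs" "set rs \<subseteq> {1..l}" using Cons by auto
  have IH: "Dag (Vrows rs) = 0" using Cons by auto
  have aN: "alpha i \<in> {-int N..-1}" "beta i \<in> {-int N..-1}"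
    using alpha_beta_mem[OF i(1)] Kbar_subset by auto
  have av1: "avoids (alpha i) (Vrows rs) \<and> avoids (-(alpha i)-1) (Vrows rs)"
    using Vrows_avoids[OF i(3,1,2)] by auto
  have av2: "avoids (beta i) (Vrows rs) \<and> avoids (-(beta i)-1) (Vrows rs)"
    using Vrows_avoids[OF i(3,1,2)] by auto
  have "Vrows (i # rs) = Xe (alpha i) \<^bold>\<and> Vrows rs - Xe (beta i) \<^bold>\<and> Vrows rs"
    unfolding Vrows_def Yrow_def by (simp add: wedge_diff_left)
  hence "Dag (Vrows (i # rs)) = Dag (Xe (alpha i) \<^bold>\<and> Vrows rs) - Dag (Xe (beta i) \<^bold>\<and> Vrows rs)"
    by (simp add: omega_hat_dag_diff)
  also have "\<dots> = 0"
    using omega_hat_dag_Xe_wedge[OF aN(1) _ _ Vrows_fin_supp] omega_hat_dag_Xe_wedge[OF aN(2) _ _ Vrows_fin_supp] av1 av2 IH by simp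
  finally show ?case .
qed

definition V0 :: ext where "V0 = VT N K l T \<^bold>\<and> eset K"

lemma V0_eq: "V0 = Vrows [1..<Suc l]"
  unfolding V0_def VT_def wedge_list_def Vrows_def foldr_wedge_assoc Yrow_def alpha_def beta_def XeK_def
  by simp

lemma homog_V0: "homog l V0"
proof -
  have s: "set [1..<Suc l] \<subseteq> {1..l}" by auto
  have "homog (length [1..<Suc l]) (Vrows [1..<Suc l])" by (rule homog_Vrows[OF s])
  thus ?thesis unfolding V0_eq length_upt by (simp only: diff_Suc_1)
qed
lemma omega_hat_dag_V0: "Dag V0 = 0"
proof -
  have s: "set [1..<Suc l] \<subseteq> {1..l}" by auto
  show ?thesis unfolding V0_eq by (rule omega_hat_dag_Vrows[OF distinct_upt s])
qed

definition raised :: "nat \<Rightarrow> ext" where "raised n = wpow omK n \<^bold>\<and> V0"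

lemma raised_0: "raised 0 = V0" unfolding raised_def wpow_0
  by (rule wedge_one_left[OF homog_fin_supp[OF homog_V0]])
lemma raised_Suc: "raised (Suc n) = omK \<^bold>\<and> raised n" unfolding raised_def wpow_Suc wedge_assoc ..
lemma homog_raised: "homog (l + n) (raised n)"
  by (induct n) (simp_all add: raised_0 homog_V0 raised_Suc homog_omega_Kbar_wedge)

lemma omega_hat_dag_raised:
  "Dag (raised (Suc n)) = ext_smult (real (Suc n) * (real m - 2 * real l - real n)) (raised n)"
proof (induct n)
  case 0
  show ?case unfolding raised_Suc homog_commutator[OF homog_raised] using omega_hat_dag_V0
    by (simp add: raised_0)
next
  case (Suc n)
  have "Dag (raised (Suc (Suc n))) =
      omK \<^bold>\<and> Dag (raised (Suc n)) + ext_smult (real m - 2 * real (l + Suc n)) (raised (Suc n))"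
    unfolding raised_Suc[of "Suc n"] by (rule homog_commutator[OF homog_raised])
  also have "\<dots> = ext_smult
      (real (Suc n) * (real m - 2 * real l - real n) + (real m - 2 * real (l + Suc n))) (raised (Suc n))"
    unfolding Suc wedge_smult_right raised_Suc[symmetric] ext_smult_add_scalar ..
  also have "real (Suc n) * (real m - 2 * real l - real n) + (real m - 2 * real (l + Suc n))
     = real (Suc (Suc n)) * (real m - 2 * real l - real (Suc n))"
    by (simp add: algebra_simps)
  finally show ?case .
qed

lemma raised_eq_0_above_degree: "m < l + n \<Longrightarrow> raised n = 0"
  using homog_eq_0_above[OF homog_raised] by simp

lemma raised_eq_0: "m - 2 * l < n \<Longrightarrow> raised n = 0"
proof (induct "m + 1 - n" arbitrary: n rule: less_induct)
  case less
  show ?case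
  proof (cases "m < l + n")
    case True thus ?thesis by (rule raised_eq_0_above_degree)
  next
    case False
    have "raised (Suc n) = 0" by (rule less(1)) (use False less(2) in auto)
    hence "ext_smult (real (Suc n) * (real m - 2 * real l - real n)) (raised n) = 0"
      using omega_hat_dag_raised[of n] by simp
    moreover have "real (Suc n) * (real m - 2 * real l - real n) \<noteq> 0"
      using less(2) two_l_le by auto
    ultimately show ?thesis by (rule ext_smult_eq_0D[rotated])
  qed
qed

lemma Phi_eq_raised: "Phi N l n T K = ext_smult (1 / fact n) (raised n)"
  by (simp add: Phi_def raised_def V0_def)

lemma omega_hat_Phi:
  "omega_hat N (Phi N l j T K) =
    (if j < m - 2 * l then ext_smult (real (j + 1)) (Phi N l (j + 1) T K) else 0)"
  if "j \<le> m - 2 * l"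
proof -
  have "omega_hat N (Phi N l j T K) = ext_smult (1 / fact j) (raised (Suc j))"
    unfolding Phi_eq_raised omega_hat_def wedge_smult_right homog_omegaN_wedge[OF homog_raised] raised_Suc ..
  moreover have "real (j + 1) * (1 / fact (j + 1)) = (1 / fact j :: real)"
    by (simp add: divide_simps)
  moreover have "raised (Suc j) = 0" if "\<not> j < m - 2 * l"
    using that \<open>j \<le> m - 2 * l\<close> by (intro raised_eq_0) auto
  ultimately show ?thesis by (simp add: Phi_eq_raised ext_smult_smult)
qed

lemma omega_hat_dag_Phi:
  "Dag (Phi N l j T K) =
    (if 0 < j then ext_smult (real (m - 2 * l - j + 1)) (Phi N l (j - 1) T K) else 0)"
  if "j \<le> m - 2 * l"
proof (cases j)
  case 0
  then show ?thesis by (simp add: Phi_eq_raised omega_hat_dag_smult raised_0 omega_hat_dag_V0)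
next
  case (Suc n)
  have coeff: "real (m - 2 * l - Suc n + 1) = real m - 2 * real l - real n"
    using that two_l_le by (simp add: Suc of_nat_diff)
  have fact_Suc_cancel: "1 / fact (Suc n) * (real (Suc n) * c) = c * (1 / fact n)" for c :: real
    unfolding fact_Suc by simp
  show ?thesis
    unfolding Suc diff_Suc_1 Phi_eq_raised omega_hat_dag_smult omega_hat_dag_raised ext_smult_smult
      coeff fact_Suc_cancel by simp
qed

end

theorem mainTheorem9:
  fixes N l j :: nat and K :: "int set" and T :: "nat \<Rightarrow> nat \<Rightarrow> nat"
  assumes "K \<in> Kset N"
    and "T \<in> SYT (card (Kbar N K)) l"
    and "j \<le> card (Kbar N K) - 2 * l"
  shows "omega_hat N (Phi N l j T K) =
           (if j < card (Kbar N K) - 2 * l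
            then ext_smult (real (j + 1)) (Phi N l (j + 1) T K) else 0)
       \<and> omega_hat_dag N (Phi N l j T K) =
           (if 0 < j
            then ext_smult (real (card (Kbar N K) - 2 * l - j + 1)) (Phi N l (j - 1) T K) else 0)"
proof -
  interpret tableau_setup N K l T
    using assms(1,2) by unfold_locales
  show ?thesis using assms(3) by (simp add: omega_hat_Phi omega_hat_dag_Phi)
qed

end
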